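(* Let $A$ be a unital commutative Banach algebra, $X$ a compact Hausdorff space, and $f:X\to A$ a continuous function. If $f(X)$ generates $A$, then the map $\Phi:\mathfrak{M}(A)\to \vec{\mathrm{sp}}(f)$, $\phi\mapsto\phi\circ f$, is a homeomorphism.
   Context: $\mathfrak{M}(A)$ denotes the character space of $A$ (nonzero multiplicative linear functionals, with the weak* topology). "$f(X)$ generates $A$" means that $A$ is the smallest closed subalgebra of $A$ containing $f(X)$ and the unit. The joint spectrum $\vec{\mathrm{sp}}(f)$ is the set of all functions $\lambda:X\to\mathbb{C}$ such that the ideal of $A$ generated by $\{\lambda(x)\mathbf 1-f(x):x\in X\}$ is proper; equivalently $\vec{\mathrm{sp}}(f)=\{\phi\circ f:\phi\in\mathfrak{M}(A)\}$. For continuous $f$ it is a compact subset of $C(X)$, and is given the topology of the uniform norm $\|g\|_X=\sup_{x\in X}|g(x)|$. *)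

theory Defs
  imports "HOL-Analysis.Analysis"
begin

text \<open>A complex Banach algebra structure on a real unital commutative Banach algebra:
  a complex scalar multiplication extending the real one, absolutely homogeneous
  for the norm, and compatible with the algebra multiplication.\<close>
definition complex_scaling ::
  "(complex \<Rightarrow> 'a::{banach, real_normed_algebra_1, comm_ring_1} \<Rightarrow> 'a) \<Rightarrow> bool" where
  "complex_scaling sc \<longleftrightarrow>
     (\<forall>c x y. sc c (x + y) = sc c x + sc c y) \<and>
     (\<forall>c d x. sc (c + d) x = sc c x + sc d x) \<and>
     (\<forall>c d x. sc (c * d) x = sc c (sc d x)) \<and>
     (\<forall>x. sc 1 x = x) \<and>
     (\<forall>r x. sc (complex_of_real r) x = scaleR r x) \<and>
     (\<forall>c x. norm (sc c x) = cmod c * norm x) \<and>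
     (\<forall>c x y. sc c (x * y) = sc c x * y)"

text \<open>Its topology is the weak* topology, i.e. the subspace topology of the product
  (pointwise convergence) topology on functions 'a => complex.\<close>
definition character_space ::
  "(complex \<Rightarrow> 'a::{banach, real_normed_algebra_1, comm_ring_1} \<Rightarrow> 'a) \<Rightarrow> ('a \<Rightarrow> complex) set" where
  "character_space sc = {\<phi>. (\<exists>x. \<phi> x \<noteq> 0) \<and>
      (\<forall>x y. \<phi> (x + y) = \<phi> x + \<phi> y) \<and>
      (\<forall>c x. \<phi> (sc c x) = c * \<phi> x) \<and>
      (\<forall>x y. \<phi> (x * y) = \<phi> x * \<phi> y)}"

definition complex_subalgebra ::
  "(complex \<Rightarrow> 'a::{banach, real_normed_algebra_1, comm_ring_1} \<Rightarrow> 'a) \<Rightarrow> 'a set \<Rightarrow> bool" where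
  "complex_subalgebra sc S \<longleftrightarrow> 1 \<in> S \<and> (\<forall>x\<in>S. \<forall>y\<in>S. x + y \<in> S \<and> x * y \<in> S) \<and>
      (\<forall>c. \<forall>x\<in>S. sc c x \<in> S)"

definition generates ::
  "(complex \<Rightarrow> 'a::{banach, real_normed_algebra_1, comm_ring_1} \<Rightarrow> 'a) \<Rightarrow> 'a set \<Rightarrow> bool" where
  "generates sc T \<longleftrightarrow> \<Inter>{S. complex_subalgebra sc S \<and> closed S \<and> T \<subseteq> S} = UNIV"

text \<open>Joint spectrum, as the set of functions phi o f (restricted to the carrier of X,
  so that they are elements of C(X) as represented by cfunspace).\<close>
definition joint_spectrum ::
  "(complex \<Rightarrow> 'a::{banach, real_normed_algebra_1, comm_ring_1} \<Rightarrow> 'a) \<Rightarrow> 'x topology \<Rightarrow> ('x \<Rightarrow> 'a)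
     \<Rightarrow> ('x \<Rightarrow> complex) set" where
  "joint_spectrum sc X f = (\<lambda>\<phi>. restrict (\<phi> \<circ> f) (topspace X)) ` character_space sc"

end

theory Submission
  imports Defs
begin

text \<open>Characters are automatically bounded by the norm (a Neumann series inverts \<open>1 - y\<close>
  whenever \<open>\<parallel>y\<parallel> < 1\<close>), hence 1-Lipschitz. Boundedness makes the character space a closed
  subset of a product of discs, so it is compact in the weak* topology; equicontinuity lets
  pointwise convergence of characters on the compact set \<open>f(X)\<close> upgrade to uniform
  convergence, so \<open>\<phi> \<mapsto> \<phi> \<circ> f\<close> is continuous into \<open>C(X)\<close>. Two characters agreeing on \<open>f(X)\<close>
  agree on the closed subalgebra it generates, i.e. everywhere. A continuous bijection from a
  compact space onto a Hausdorff space is a homeomorphism.\<close>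

lemma right_inverse_one_minus:
  fixes y :: "'a::{banach, real_normed_algebra_1, comm_ring_1}"
  assumes "norm y < 1"
  shows "\<exists>z. (1 - y) * z = 1"
proof -
  have "(\<lambda>n. y ^ n) sums (\<Sum>n. y ^ n)"
    by (rule summable_sums[OF complete_algebra_summable_geometric[OF assms]])
  then have "(\<lambda>N. (1 - y) * (\<Sum>i<N. y ^ i)) \<longlonglongrightarrow> (1 - y) * (\<Sum>n. y ^ n)"
    by (intro tendsto_mult_left) (simp add: sums_def)
  moreover have "(\<lambda>N. 1 - y ^ N) \<longlonglongrightarrow> 1 - 0"
    by (intro tendsto_diff tendsto_const LIMSEQ_power_zero assms)
  then have "(\<lambda>N. (1 - y) * (\<Sum>i<N. y ^ i)) \<longlonglongrightarrow> 1"
    by (simp add: one_diff_power_eq)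
  ultimately show ?thesis
    using LIMSEQ_unique by blast
qed

lemma
  assumes "\<phi> \<in> character_space sc"
  shows character_add: "\<phi> (x + y) = \<phi> x + \<phi> y"
    and character_mult: "\<phi> (x * y) = \<phi> x * \<phi> y"
    and character_scale: "\<phi> (sc c x) = c * \<phi> x"
    and character_one: "\<phi> 1 = 1"
    and character_diff: "\<phi> (x - y) = \<phi> x - \<phi> y"
proof -
  have add: "\<And>x y. \<phi> (x + y) = \<phi> x + \<phi> y" and mult: "\<And>x y. \<phi> (x * y) = \<phi> x * \<phi> y"
    using assms by (auto simp: character_space_def)
  show "\<phi> (x + y) = \<phi> x + \<phi> y" "\<phi> (x * y) = \<phi> x * \<phi> y" "\<phi> (sc c x) = c * \<phi> x"
    using assms by (auto simp: character_space_def)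
  obtain u where "\<phi> u \<noteq> 0"
    using assms by (auto simp: character_space_def)
  with mult[of 1 u] show "\<phi> 1 = 1"
    by simp
  show "\<phi> (x - y) = \<phi> x - \<phi> y"
    using add[of "x - y" y] by (simp add: eq_diff_eq)
qed

lemma norm_character_le:
  assumes sc: "complex_scaling sc" and \<phi>: "\<phi> \<in> character_space sc"
  shows "cmod (\<phi> x) \<le> norm x"
proof (rule ccontr)
  assume "\<not> cmod (\<phi> x) \<le> norm x"
  then have less: "norm x < cmod (\<phi> x)" and nonzero: "\<phi> x \<noteq> 0"
    by auto
  define y where "y = sc (inverse (\<phi> x)) x"
  have "norm y = norm x / cmod (\<phi> x)"
    using sc by (simp add: y_def complex_scaling_def norm_inverse divide_inverse mult.commute)
  with less nonzero have "norm y < 1"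
    by (simp add: divide_less_eq)
  then obtain z where z: "(1 - y) * z = 1"
    using right_inverse_one_minus by blast
  have "\<phi> y = 1"
    using nonzero by (simp add: y_def character_scale[OF \<phi>])
  then have "\<phi> ((1 - y) * z) = 0"
    by (simp add: character_mult[OF \<phi>] character_diff[OF \<phi>] character_one[OF \<phi>])
  with z show False
    by (simp add: character_one[OF \<phi>])
qed

lemma dist_character_le:
  assumes "complex_scaling sc" and "\<phi> \<in> character_space sc"
  shows "dist (\<phi> a) (\<phi> b) \<le> dist a b"
  using norm_character_le[OF assms, of "a - b"] by (simp add: dist_norm character_diff[OF assms(2)])

lemma continuous_on_character:
  assumes "complex_scaling sc" and "\<phi> \<in> character_space sc"
  shows "continuous_on UNIV \<phi>"
  unfolding continuous_on_iff by (metis dist_character_le[OF assms] order_le_less_trans)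

lemma compact_character_space:
  assumes sc: "complex_scaling sc"
  shows "compact (character_space sc)"
proof -
  define B :: "('a \<Rightarrow> complex) set" where "B = PiE UNIV (\<lambda>a. cball 0 (norm a))"
  define C :: "('a \<Rightarrow> complex) set" where "C = {\<phi>. \<phi> 1 = 1 \<and> (\<forall>x y. \<phi> (x + y) = \<phi> x + \<phi> y) \<and>
      (\<forall>c x. \<phi> (sc c x) = c * \<phi> x) \<and> (\<forall>x y. \<phi> (x * y) = \<phi> x * \<phi> y)}"
  have "compactin (product_topology (\<lambda>_. euclidean) UNIV) B"
    unfolding B_def compactin_PiE by simp
  then have "compact B"
    by (simp add: euclidean_product_topology)
  moreover have "closed C"
    unfolding C_def
    by (intro closed_Collect_conj closed_Collect_all closed_Collect_eq continuous_intros
          continuous_on_product_coordinates)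
  moreover have "character_space sc = B \<inter> C"
  proof (intro equalityI subsetI)
    fix \<phi> assume \<phi>: "\<phi> \<in> character_space sc"
    then show "\<phi> \<in> B \<inter> C"
      using norm_character_le[OF sc \<phi>] character_one[OF \<phi>]
      by (simp add: B_def C_def PiE_iff character_space_def)
  next
    fix \<phi> assume "\<phi> \<in> B \<inter> C"
    then show "\<phi> \<in> character_space sc"
      unfolding C_def character_space_def by (auto intro: exI[of _ 1])
  qed
  ultimately show ?thesis
    by auto
qed

lemma character_eqI_generates:
  assumes sc: "complex_scaling sc" and "generates sc T"
    and \<phi>: "\<phi> \<in> character_space sc" and \<psi>: "\<psi> \<in> character_space sc"
    and eq: "\<And>a. a \<in> T \<Longrightarrow> \<phi> a = \<psi> a"
  shows "\<phi> = \<psi>"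
proof -
  let ?S = "{a. \<phi> a = \<psi> a}"
  have "complex_subalgebra sc ?S"
    unfolding complex_subalgebra_def
    by (simp add: character_one[OF \<phi>] character_add[OF \<phi>] character_mult[OF \<phi>]
        character_scale[OF \<phi>] character_one[OF \<psi>] character_add[OF \<psi>] character_mult[OF \<psi>]
        character_scale[OF \<psi>])
  moreover have "closed ?S"
    using continuous_on_character[OF sc] \<phi> \<psi> by (intro closed_Collect_eq) auto
  ultimately have "UNIV \<subseteq> ?S"
    using assms(2) eq unfolding generates_def by blast
  then show ?thesis
    by auto
qed

lemma continuous_map_to_mtopology_of:
  "continuous_map S (mtopology_of m) g \<longleftrightarrow>
   (\<forall>x\<in>topspace S. \<forall>\<epsilon>>0. \<exists>U. openin S U \<and> x \<in> U \<and> (\<forall>y\<in>U. g y \<in> mball_of m (g x) \<epsilon>))"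
  unfolding mtopology_of_def mball_of_def
  by (rule Metric_space.continuous_map_to_metric[OF Metric_space_mspace_mdist])

lemma restrict_compose_in_cfunspace:
  fixes f :: "'x \<Rightarrow> 'a::topological_space" and \<phi> :: "'a \<Rightarrow> 'b::metric_space"
  assumes "compact_space X" and "continuous_map X euclidean f" and "continuous_on UNIV \<phi>"
  shows "restrict (\<phi> \<circ> f) (topspace X) \<in> mspace (cfunspace X euclidean_metric)"
proof -
  have cX: "compactin X (topspace X)"
    using assms(1) by (simp add: compact_space_def)
  have "continuous_map X euclidean (\<phi> \<circ> f)"
    by (metis assms(2,3) continuous_map_compose continuous_map_iff_continuous subtopology_UNIV)
  then have "continuous_map X euclidean (restrict (\<phi> \<circ> f) (topspace X))"
    by (rule continuous_map_eq) auto
  then show ?thesis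
    unfolding compactin_mspace_cfunspace[OF cX] by simp
qed

lemma dist_nonexpansive_less_on_net:
  assumes \<phi>: "\<And>a b. dist (\<phi> a) (\<phi> b) \<le> dist a b" and \<psi>: "\<And>a b. dist (\<psi> a) (\<psi> b) \<le> dist a b"
    and "y \<in> (\<Union>a\<in>K. ball a \<delta>)" and near: "\<And>a. a \<in> K \<Longrightarrow> dist (\<phi> a) (\<psi> a) < \<delta>"
  shows "dist (\<phi> y) (\<psi> y) < 3 * \<delta>"
proof -
  obtain a where "a \<in> K" and a: "dist a y < \<delta>"
    using assms(3) by auto
  have "dist (\<phi> y) (\<psi> y) \<le> dist (\<phi> y) (\<phi> a) + dist (\<phi> a) (\<psi> a) + dist (\<psi> a) (\<psi> y)"
    using dist_triangle[of "\<phi> y" "\<psi> y" "\<phi> a"] dist_triangle[of "\<phi> a" "\<psi> y" "\<psi> a"] by linarith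
  also have "\<dots> < 3 * \<delta>"
    using \<phi>[of y a] \<psi>[of a y] near[OF \<open>a \<in> K\<close>] a by (simp add: dist_commute)
  finally show ?thesis .
qed

text \<open>Pointwise convergence of nonexpansive maps is uniform on compact sets.\<close>

lemma continuous_map_restrict_compose_cfunspace:
  fixes f :: "'x \<Rightarrow> 'a::metric_space" and F :: "('a \<Rightarrow> 'b::metric_space) set"
  assumes X: "compact_space X" and f: "continuous_map X euclidean f"
    and lip: "\<And>\<phi> a b. \<phi> \<in> F \<Longrightarrow> dist (\<phi> a) (\<phi> b) \<le> dist a b"
  shows "continuous_map (subtopology euclidean F) (mtopology_of (cfunspace X euclidean_metric))
           (\<lambda>\<phi>. restrict (\<phi> \<circ> f) (topspace X))"
    (is "continuous_map _ (mtopology_of ?M) ?\<Phi>")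
proof -
  have in_M: "?\<Phi> \<phi> \<in> mspace ?M" if "\<phi> \<in> F" for \<phi>
    using restrict_compose_in_cfunspace[OF X f] lip[OF that]
    unfolding continuous_on_iff by (metis order_le_less_trans)
  have "compact (f ` topspace X)"
    using image_compactin[OF _ f] X by (simp add: compact_space_def)
  show ?thesis
    unfolding continuous_map_to_mtopology_of
  proof (intro ballI allI impI)
    fix \<phi>\<^sub>0 and \<epsilon> :: real
    assume "\<phi>\<^sub>0 \<in> topspace (subtopology euclidean F)" and \<epsilon>: "\<epsilon> > 0"
    then have \<phi>\<^sub>0: "\<phi>\<^sub>0 \<in> F"
      by simp
    have "f ` topspace X \<subseteq> (\<Union>a\<in>f ` topspace X. ball a (\<epsilon>/4))"
      using \<epsilon> by force
    then obtain K where K: "finite K" "f ` topspace X \<subseteq> (\<Union>a\<in>K. ball a (\<epsilon>/4))"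
      using compactE_image[OF \<open>compact (f ` topspace X)\<close>, where f = "\<lambda>a. ball a (\<epsilon>/4)"]
      by (metis open_ball)
    define V where "V = {\<psi>. \<forall>a\<in>K. \<psi> (id a) \<in> ball (\<phi>\<^sub>0 a) (\<epsilon>/4)}"
    have "open V"
      unfolding V_def by (rule product_topology_basis') (use K in auto)
    show "\<exists>U. openin (subtopology euclidean F) U \<and> \<phi>\<^sub>0 \<in> U \<and>
              (\<forall>\<psi>\<in>U. ?\<Phi> \<psi> \<in> mball_of ?M (?\<Phi> \<phi>\<^sub>0) \<epsilon>)"
    proof (intro exI conjI ballI)
      show "openin (subtopology euclidean F) (V \<inter> F)"
        using \<open>open V\<close> by (auto simp: openin_subtopology)
      show "\<phi>\<^sub>0 \<in> V \<inter> F"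
        using \<phi>\<^sub>0 \<epsilon> by (simp add: V_def)
      fix \<psi> assume "\<psi> \<in> V \<inter> F"
      then have \<psi>: "\<psi> \<in> F" and near: "\<And>a. a \<in> K \<Longrightarrow> dist (\<phi>\<^sub>0 a) (\<psi> a) < \<epsilon>/4"
        by (auto simp: V_def)
      have "mdist ?M (?\<Phi> \<phi>\<^sub>0) (?\<Phi> \<psi>) \<le> 3 * (\<epsilon>/4)"
      proof (rule mdist_cfunspace_le)
        fix x assume x: "x \<in> topspace X"
        have "dist (\<phi>\<^sub>0 (f x)) (\<psi> (f x)) < 3 * (\<epsilon>/4)"
          by (rule dist_nonexpansive_less_on_net[OF lip[OF \<phi>\<^sub>0] lip[OF \<psi>] _ near])
            (use K(2) x in blast)
        then show "mdist euclidean_metric (?\<Phi> \<phi>\<^sub>0 x) (?\<Phi> \<psi> x) \<le> 3 * (\<epsilon>/4)"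
          using x by simp
      qed (use \<epsilon> in simp)
      then show "?\<Phi> \<psi> \<in> mball_of ?M (?\<Phi> \<phi>\<^sub>0) \<epsilon>"
        using in_M[OF \<phi>\<^sub>0] in_M[OF \<psi>] \<epsilon> by simp
    qed
  qed
qed

theorem proposition3p1:
  fixes sc :: "complex \<Rightarrow> 'a::{banach, real_normed_algebra_1, comm_ring_1} \<Rightarrow> 'a"
    and X :: "'x topology" and f :: "'x \<Rightarrow> 'a"
  assumes "complex_scaling sc"
    and "compact_space X" and "Hausdorff_space X"
    and "continuous_map X euclidean f"
    and "generates sc (f ` topspace X)"
  shows "homeomorphic_map (subtopology euclidean (character_space sc))
           (subtopology (mtopology_of (cfunspace X euclidean_metric)) (joint_spectrum sc X f))
           (\<lambda>\<phi>. restrict (\<phi> \<circ> f) (topspace X))"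
    (is "homeomorphic_map ?Ch (subtopology ?C _) ?\<Phi>")
proof (rule continuous_imp_homeomorphic_map)
  have "continuous_map ?Ch ?C ?\<Phi>"
    using continuous_map_restrict_compose_cfunspace[OF assms(2,4)] dist_character_le[OF assms(1)]
    by blast
  then show "continuous_map ?Ch (subtopology ?C (joint_spectrum sc X f)) ?\<Phi>"
    by (simp add: continuous_map_in_subtopology joint_spectrum_def)
  then show "?\<Phi> ` topspace ?Ch = topspace (subtopology ?C (joint_spectrum sc X f))"
    by (auto simp: joint_spectrum_def continuous_map_def)
  show "compact_space ?Ch"
    using compact_character_space[OF assms(1)] by (simp add: compact_space_subtopology)
  show "Hausdorff_space (subtopology ?C (joint_spectrum sc X f))"
    using Metric_space.Hausdorff_space_mtopology[OF Metric_space_mspace_mdist]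
    unfolding mtopology_of_def by (rule Hausdorff_space_subtopology)
  show "inj_on ?\<Phi> (topspace ?Ch)"
  proof (rule inj_onI)
    fix \<phi> \<psi> assume "\<phi> \<in> topspace ?Ch" "\<psi> \<in> topspace ?Ch" and eq: "?\<Phi> \<phi> = ?\<Phi> \<psi>"
    then have "\<phi> \<in> character_space sc" "\<psi> \<in> character_space sc"
      by simp_all
    moreover have "\<phi> (f x) = \<psi> (f x)" if "x \<in> topspace X" for x
      using fun_cong[OF eq, of x] that by simp
    ultimately show "\<phi> = \<psi>"
      by (intro character_eqI_generates[OF assms(1,5)]) blast+
  qed
qed

end
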